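(* Let $N,r\in\mathbb N$ and let $\mathsf A\in\mathbb H^{N\times N}$, $\mathsf B\in\mathbb H^{N\times r}$, $\mathsf C\in\mathbb H^{r\times N}$, $\mathsf D\in\mathbb H^{r\times r}$ be such that the matrix $\begin{pmatrix}\mathsf A&\mathsf B\\\mathsf C&\mathsf D\end{pmatrix}\in\mathbb H^{(N+r)\times(N+r)}$ is unitary. Let $B(x)=\mathsf D+\sum_{n\ge1}P_n(x)\mathsf C\mathsf A^{n-1}\mathsf B$, $x\in\mathcal E$. Then the operator $M_B\big(\sum_nP_nu_n\big)=\sum_n(P_n\odot B)u_n$ is an isometry from $(\mathbf H_2(\mathcal E))^r$ into itself, and the reproducing kernel Hilbert space $\mathcal H(B)$ with kernel $K_B(x,y)=\sum_{n\ge0}\big(P_n(x)\overline{P_n(y)}I_r-(P_n\odot B)(x)((P_n\odot B)(y))^*\big)$ is finite dimensional.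
   Context: For $m\ge0$, $T^m_j=\frac{2(m-j+1)}{(m+1)(m+2)}$, $c_m=\sum_{j=0}^m(-1)^jT^m_j$, $P_m(x)=\frac1{c_m}\sum_{j=0}^mT^m_jx^{m-j}\overline{x}^{\,j}$. $\mathcal E=\{x\in\mathbb H:9x_0^2+x_1^2+x_2^2+x_3^2<1\}$; $(\mathbf H_2(\mathcal E))^r$ is the Hilbert space of functions $\sum_mP_mf_m$, $f_m\in\mathbb H^r$, with $\|f\|^2=\sum_mf_m^*f_m$. $\odot$ is the Cauchy–Kovalevskaya product $f\odot g=CK(f|_{x_0=0}g|_{x_0=0})$, satisfying $P_n\odot\big(\sum_mP_mb_m\big)=\sum_mP_{n+m}b_m$ for matrix coefficients $b_m$. *)

theory Defs
  imports Complex_Main "Jordan_Normal_Form.Matrix"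
begin

datatype quat = Quat (qRe: real) (qI: real) (qJ: real) (qK: real)

instantiation quat :: ring_1
begin
definition "0 = Quat 0 0 0 0"
definition "1 = Quat 1 0 0 0"
definition "a + b = Quat (qRe a + qRe b) (qI a + qI b) (qJ a + qJ b) (qK a + qK b)"
definition "a - b = Quat (qRe a - qRe b) (qI a - qI b) (qJ a - qJ b) (qK a - qK b)"
definition "- a = Quat (- qRe a) (- qI a) (- qJ a) (- qK a)"
definition "a * b = Quat
   (qRe a * qRe b - qI a * qI b - qJ a * qJ b - qK a * qK b)
   (qRe a * qI b + qI a * qRe b + qJ a * qK b - qK a * qJ b)
   (qRe a * qJ b - qI a * qK b + qJ a * qRe b + qK a * qI b)
   (qRe a * qK b + qI a * qJ b - qJ a * qI b + qK a * qRe b)"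
instance
  by intro_classes
     (simp_all add: zero_quat_def one_quat_def plus_quat_def minus_quat_def
        uminus_quat_def times_quat_def quat.expand algebra_simps)
end

definition qreal :: "real \<Rightarrow> quat" where "qreal t = Quat t 0 0 0"
definition qcnj :: "quat \<Rightarrow> quat" where "qcnj q = Quat (qRe q) (- qI q) (- qJ q) (- qK q)"
definition qnorm2 :: "quat \<Rightarrow> real" where
  "qnorm2 q = (qRe q)\<^sup>2 + (qI q)\<^sup>2 + (qJ q)\<^sup>2 + (qK q)\<^sup>2"

definition qsuminf :: "(nat \<Rightarrow> quat) \<Rightarrow> quat" where
  "qsuminf f = Quat (\<Sum>n. qRe (f n)) (\<Sum>n. qI (f n)) (\<Sum>n. qJ (f n)) (\<Sum>n. qK (f n))"

definition mat_adj :: "quat mat \<Rightarrow> quat mat" where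
  "mat_adj U = mat (dim_col U) (dim_row U) (\<lambda>(i,j). qcnj (U $$ (j,i)))"

definition qunitary :: "quat mat \<Rightarrow> bool" where
  "qunitary U \<longleftrightarrow> dim_row U = dim_col U \<and>
     U * mat_adj U = 1\<^sub>m (dim_row U) \<and> mat_adj U * U = 1\<^sub>m (dim_row U)"

definition T :: "nat \<Rightarrow> nat \<Rightarrow> real" where
  "T m j = 2 * (real m - real j + 1) / ((real m + 1) * (real m + 2))"

definition cT :: "nat \<Rightarrow> real" where
  "cT m = (\<Sum>j\<le>m. (-1) ^ j * T m j)"

definition P :: "nat \<Rightarrow> quat \<Rightarrow> quat" where
  "P m x = qreal (1 / cT m) * (\<Sum>j\<le>m. qreal (T m j) * x ^ (m - j) * qcnj x ^ j)"

definition Ell :: "quat set" where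
  "Ell = {x. 9 * (qRe x)\<^sup>2 + (qI x)\<^sup>2 + (qJ x)\<^sup>2 + (qK x)\<^sup>2 < 1}"

text \<open>An element \<open>\<Sum>\<^sub>m P\<^sub>m f\<^sub>m\<close> is represented by its coefficient sequence \<open>f\<close>;
  \<open>\<parallel>f\<parallel>\<^sup>2 = \<Sum>\<^sub>m f\<^sub>m\<^sup>* f\<^sub>m\<close>.\<close>
definition vnorm2 :: "quat vec \<Rightarrow> real" where
  "vnorm2 v = (\<Sum>i<dim_vec v. qnorm2 (v $ i))"

definition H2 :: "nat \<Rightarrow> (nat \<Rightarrow> quat vec) set" where
  "H2 r = {f. (\<forall>m. f m \<in> carrier_vec r) \<and> summable (\<lambda>m. vnorm2 (f m))}"

definition H2norm2 :: "(nat \<Rightarrow> quat vec) \<Rightarrow> real" where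
  "H2norm2 f = (\<Sum>m. vnorm2 (f m))"

definition bcoef :: "quat mat \<Rightarrow> quat mat \<Rightarrow> quat mat \<Rightarrow> quat mat \<Rightarrow> nat \<Rightarrow> quat mat" where
  "bcoef A B C D m = (if m = 0 then D else C * (A ^\<^sub>m (m - 1)) * B)"

definition Bfun :: "quat mat \<Rightarrow> quat mat \<Rightarrow> quat mat \<Rightarrow> quat mat \<Rightarrow> nat \<Rightarrow> quat \<Rightarrow> quat mat" where
  "Bfun A B C D r x = mat r r (\<lambda>(i,j). qsuminf (\<lambda>m. P m x * bcoef A B C D m $$ (i,j)))"

text \<open>\<open>P\<^sub>n \<odot> B = \<Sum>\<^sub>m P\<^sub>n\<^sub>+\<^sub>m b\<^sub>m\<close> (the stated property of the CK product).\<close>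
definition PnB :: "quat mat \<Rightarrow> quat mat \<Rightarrow> quat mat \<Rightarrow> quat mat \<Rightarrow> nat \<Rightarrow> nat \<Rightarrow> quat \<Rightarrow> quat mat" where
  "PnB A B C D r n x = mat r r (\<lambda>(i,j). qsuminf (\<lambda>m. P (n + m) x * bcoef A B C D m $$ (i,j)))"

text \<open>\<open>M\<^sub>B(\<Sum>\<^sub>n P\<^sub>n u\<^sub>n) = \<Sum>\<^sub>n (P\<^sub>n \<odot> B) u\<^sub>n = \<Sum>\<^sub>n \<Sum>\<^sub>m P\<^sub>n\<^sub>+\<^sub>m b\<^sub>m u\<^sub>n\<close>;
  its \<open>k\<close>-th coefficient is \<open>\<Sum>\<^sub>j\<^sub>\<le>\<^sub>k b\<^sub>j u\<^sub>k\<^sub>-\<^sub>j\<close>.\<close>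
definition MB :: "quat mat \<Rightarrow> quat mat \<Rightarrow> quat mat \<Rightarrow> quat mat \<Rightarrow> nat \<Rightarrow> (nat \<Rightarrow> quat vec) \<Rightarrow> nat \<Rightarrow> quat vec" where
  "MB A B C D r u k = vec r (\<lambda>i. \<Sum>j\<le>k. (bcoef A B C D j *\<^sub>v u (k - j)) $ i)"

definition KB :: "quat mat \<Rightarrow> quat mat \<Rightarrow> quat mat \<Rightarrow> quat mat \<Rightarrow> nat \<Rightarrow> quat \<Rightarrow> quat \<Rightarrow> quat mat" where
  "KB A B C D r x y = mat r r (\<lambda>(i,j). qsuminf (\<lambda>n.
      (if i = j then P n x * qcnj (P n y) else 0)
      - (\<Sum>l<r. PnB A B C D r n x $$ (i,l) * qcnj (PnB A B C D r n y $$ (j,l)))))"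

text \<open>The reproducing kernel Hilbert space with kernel \<open>K\<close> on \<open>S\<close> (functions \<open>S \<rightarrow> \<bbbH>\<^sup>r\<close>,
  right \<open>\<bbbH>\<close>-module) is the closure of the span of the sections \<open>K(\<cdot>,y)c\<close>.  It is finite
  dimensional iff all these sections lie in the right span of finitely many functions.\<close>
definition rkhs_finite_dim :: "(quat \<Rightarrow> quat \<Rightarrow> quat mat) \<Rightarrow> quat set \<Rightarrow> nat \<Rightarrow> bool" where
  "rkhs_finite_dim K S r \<longleftrightarrow>
     (\<exists>F :: (quat \<Rightarrow> quat vec) set. finite F \<and>
        (\<forall>y\<in>S. \<forall>c\<in>carrier_vec r. \<exists>coef :: (quat \<Rightarrow> quat vec) \<Rightarrow> quat.
           \<forall>x\<in>S. K x y *\<^sub>v c = vec r (\<lambda>i. \<Sum>f\<in>F. (f x $ i) * coef f)))"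

end

theory Submission
  imports Defs
begin

(* The realization B comes from the unitary colligation V = [A B; C D].  On coefficient
   sequences, M_B is the input-output map of the linear system
     x_(k+1) = A x_k + B u_k,   y_k = C x_k + D u_k,   x_0 = 0,
   so adj V * V = I gives the energy balance  sum_(k<K) |y_k|^2 + |x_K|^2 = sum_(k<K) |u_k|^2.
   Since V * adj V = I makes y |-> (adj A y, adj B y) isometric, the sum over m of
   |adj B (adj A)^m y|^2 is at most |y|^2; hence A^m B -> 0, and the state x_K of a
   square-summable input tends to 0: M_B is isometric.
   For the kernel put G_n(x) = sum_p P_(n+p)(x) C A^p.  Then
     [G_n(x), (P_n . B)(x)] = [G_(n+1)(x), P_n(x) I] V,
   so unitarity of V turns the n-th term of K_B(x,y) into
   G_n(x) adj G_n(y) - G_(n+1)(x) adj G_(n+1)(y).  The series telescopes to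
   K_B(x,y) = G_0(x) adj G_0(y), whose sections lie in the span of the N columns of G_0. *)

section \<open>Quaternions as a real Banach algebra\<close>

lemma quat_eq_iff: "a = b \<longleftrightarrow> qRe a = qRe b \<and> qI a = qI b \<and> qJ a = qJ b \<and> qK a = qK b"
  by (cases a; cases b) auto

lemma quat_components [simp]:
  "qRe 0 = 0" "qI 0 = 0" "qJ 0 = 0" "qK 0 = 0"
  "qRe 1 = 1" "qI 1 = 0" "qJ 1 = 0" "qK 1 = 0"
  "qRe (a + b) = qRe a + qRe b" "qI (a + b) = qI a + qI b"
  "qJ (a + b) = qJ a + qJ b" "qK (a + b) = qK a + qK b"
  "qRe (a - b) = qRe a - qRe b" "qI (a - b) = qI a - qI b"
  "qJ (a - b) = qJ a - qJ b" "qK (a - b) = qK a - qK b"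
  "qRe (- a) = - qRe a" "qI (- a) = - qI a" "qJ (- a) = - qJ a" "qK (- a) = - qK a"
  "qRe (a * b) = qRe a * qRe b - qI a * qI b - qJ a * qJ b - qK a * qK b"
  "qI (a * b) = qRe a * qI b + qI a * qRe b + qJ a * qK b - qK a * qJ b"
  "qJ (a * b) = qRe a * qJ b - qI a * qK b + qJ a * qRe b + qK a * qI b"
  "qK (a * b) = qRe a * qK b + qI a * qJ b - qJ a * qI b + qK a * qRe b"
  by (simp_all add: zero_quat_def one_quat_def plus_quat_def minus_quat_def
      uminus_quat_def times_quat_def)

lemma qRe_sum: "qRe (sum f A) = (\<Sum>x\<in>A. qRe (f x))"
  by (induct A rule: infinite_finite_induct) auto

lemma sqrt_sum_squares4_triangle:
  fixes a0 a1 a2 a3 b0 b1 b2 b3 :: real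
  shows "sqrt ((a0+b0)\<^sup>2 + (a1+b1)\<^sup>2 + (a2+b2)\<^sup>2 + (a3+b3)\<^sup>2)
    \<le> sqrt (a0\<^sup>2 + a1\<^sup>2 + a2\<^sup>2 + a3\<^sup>2) + sqrt (b0\<^sup>2 + b1\<^sup>2 + b2\<^sup>2 + b3\<^sup>2)"
proof -
  define A where "A = a0\<^sup>2 + a1\<^sup>2 + a2\<^sup>2 + a3\<^sup>2"
  define B where "B = b0\<^sup>2 + b1\<^sup>2 + b2\<^sup>2 + b3\<^sup>2"
  define S where "S = a0*b0 + a1*b1 + a2*b2 + a3*b3"
  have nonneg: "0 \<le> A" "0 \<le> B" unfolding A_def B_def by auto
  have "A * B - S\<^sup>2 = (a0*b1-a1*b0)\<^sup>2 + (a0*b2-a2*b0)\<^sup>2 + (a0*b3-a3*b0)\<^sup>2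
      + (a1*b2-a2*b1)\<^sup>2 + (a1*b3-a3*b1)\<^sup>2 + (a2*b3-a3*b2)\<^sup>2"
    unfolding A_def B_def S_def by (simp add: power2_eq_square field_simps)
  then have "S\<^sup>2 \<le> A * B" by (smt (verit) zero_le_power2)
  then have "S \<le> sqrt A * sqrt B" by (metis real_le_rsqrt real_sqrt_mult)
  then have "(a0+b0)\<^sup>2 + (a1+b1)\<^sup>2 + (a2+b2)\<^sup>2 + (a3+b3)\<^sup>2 \<le> (sqrt A + sqrt B)\<^sup>2"
    using nonneg unfolding A_def B_def S_def by (simp add: power2_sum)
  then show ?thesis
    unfolding A_def[symmetric] B_def[symmetric] using nonneg by (simp add: real_le_lsqrt)
qed

instantiation quat :: real_algebra_1
begin
definition "scaleR t q = Quat (t * qRe q) (t * qI q) (t * qJ q) (t * qK q)"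
instance
  by standard (simp_all add: scaleR_quat_def quat_eq_iff algebra_simps)
end

lemma scaleR_quat_components [simp]:
  "qRe (t *\<^sub>R q) = t * qRe q" "qI (t *\<^sub>R q) = t * qI q"
  "qJ (t *\<^sub>R q) = t * qJ q" "qK (t *\<^sub>R q) = t * qK q"
  by (simp_all add: scaleR_quat_def)

lemma qnorm2_mult: "qnorm2 (x * y) = qnorm2 x * qnorm2 y"
  by (simp add: qnorm2_def power2_eq_square field_simps)

instantiation quat :: real_normed_algebra_1
begin
definition norm_quat_def: "norm q = sqrt (qnorm2 q)"
definition sgn_quat_def: "sgn (x::quat) = x /\<^sub>R norm x"
definition dist_quat_def: "dist (x::quat) y = norm (x - y)"
definition uniformity_quat_def:
  "(uniformity :: (quat \<times> quat) filter) = (INF e\<in>{0 <..}. principal {(x, y). dist x y < e})"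
definition open_quat_def:
  "open (U :: quat set) \<longleftrightarrow> (\<forall>x\<in>U. eventually (\<lambda>(x', y). x' = x \<longrightarrow> y \<in> U) uniformity)"
instance
proof
  fix a :: real and x y :: quat
  show "norm x = 0 \<longleftrightarrow> x = 0"
    by (simp add: norm_quat_def qnorm2_def quat_eq_iff add_nonneg_eq_0_iff)
  show "norm (x + y) \<le> norm x + norm y"
    unfolding norm_quat_def qnorm2_def using sqrt_sum_squares4_triangle by simp
  show "norm (a *\<^sub>R x) = \<bar>a\<bar> * norm x"
    by (simp add: norm_quat_def qnorm2_def power_mult_distrib
        distrib_left [symmetric] real_sqrt_mult)
  show "norm (x * y) \<le> norm x * norm y"
    by (simp add: norm_quat_def qnorm2_mult real_sqrt_mult)
  show "norm (1::quat) = 1"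
    by (simp add: norm_quat_def qnorm2_def)
qed (rule sgn_quat_def dist_quat_def open_quat_def uniformity_quat_def)+
end

lemma norm_quat_mult: "norm (x * y :: quat) = norm x * norm y"
  by (simp add: norm_quat_def qnorm2_mult real_sqrt_mult)

lemma norm_quat_power: "norm ((x::quat) ^ n) = norm x ^ n"
  by (induct n) (simp_all add: norm_quat_mult)

lemma qnorm2_eq_norm_sq: "qnorm2 q = (norm q)\<^sup>2"
  by (simp add: norm_quat_def qnorm2_def)

lemma abs_quat_components_le_norm:
  "\<bar>qRe q\<bar> \<le> norm q" "\<bar>qI q\<bar> \<le> norm q" "\<bar>qJ q\<bar> \<le> norm q" "\<bar>qK q\<bar> \<le> norm q"
  unfolding norm_quat_def qnorm2_def
  by (simp_all add: real_le_rsqrt)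

lemma norm_quat_le_sum_abs_components:
  "norm q \<le> \<bar>qRe q\<bar> + \<bar>qI q\<bar> + \<bar>qJ q\<bar> + \<bar>qK q\<bar>"
proof -
  have "q = Quat (qRe q) 0 0 0 + Quat 0 (qI q) 0 0 + Quat 0 0 (qJ q) 0 + Quat 0 0 0 (qK q)"
    by (simp add: quat_eq_iff)
  then have "norm q \<le> norm (Quat (qRe q) 0 0 0) + norm (Quat 0 (qI q) 0 0)
      + norm (Quat 0 0 (qJ q) 0) + norm (Quat 0 0 0 (qK q))"
    by (metis norm_triangle_le add_mono order_refl)
  then show ?thesis by (simp add: norm_quat_def qnorm2_def)
qed

lemma bounded_linear_quat_components:
  "bounded_linear qRe" "bounded_linear qI" "bounded_linear qJ" "bounded_linear qK"
  by (auto intro!: bounded_linear_intro[where K=1] simp: abs_quat_components_le_norm)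

instance quat :: banach
proof
  fix X :: "nat \<Rightarrow> quat"
  assume "Cauchy X"
  then have "convergent (\<lambda>n. f (X n))" if "bounded_linear f" for f :: "quat \<Rightarrow> real"
    using bounded_linear.Cauchy[OF that] Cauchy_convergent_iff by blast
  then obtain a b c d where lim: "(\<lambda>n. qRe (X n)) \<longlonglongrightarrow> a" "(\<lambda>n. qI (X n)) \<longlonglongrightarrow> b"
    "(\<lambda>n. qJ (X n)) \<longlonglongrightarrow> c" "(\<lambda>n. qK (X n)) \<longlonglongrightarrow> d"
    by (meson bounded_linear_quat_components convergent_def)
  have "(\<lambda>n. \<bar>qRe (X n) - a\<bar> + \<bar>qI (X n) - b\<bar> + \<bar>qJ (X n) - c\<bar> + \<bar>qK (X n) - d\<bar>)
      \<longlonglongrightarrow> \<bar>a - a\<bar> + \<bar>b - b\<bar> + \<bar>c - c\<bar> + \<bar>d - d\<bar>"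
    by (intro tendsto_intros lim)
  then have "(\<lambda>n. \<bar>qRe (X n) - a\<bar> + \<bar>qI (X n) - b\<bar> + \<bar>qJ (X n) - c\<bar> + \<bar>qK (X n) - d\<bar>) \<longlonglongrightarrow> 0"
    by simp
  then have "(\<lambda>n. X n - Quat a b c d) \<longlonglongrightarrow> 0"
  proof (rule tendsto_0_le[where K=1], intro always_eventually allI)
    fix n
    show "norm (X n - Quat a b c d)
      \<le> norm (\<bar>qRe (X n) - a\<bar> + \<bar>qI (X n) - b\<bar> + \<bar>qJ (X n) - c\<bar> + \<bar>qK (X n) - d\<bar>) * 1"
      using norm_quat_le_sum_abs_components[of "X n - Quat a b c d"] by simp
  qed
  then show "convergent X"
    by (rule convergentI[OF LIM_zero_cancel])
qed

lemma tendsto_zero_norm_bound: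
  fixes f :: "'a \<Rightarrow> 'b :: real_normed_vector"
  assumes "(g \<longlongrightarrow> 0) F" and "\<And>x. norm (f x) \<le> g x"
  shows "(f \<longlongrightarrow> 0) F"
  by (rule tendsto_0_le[OF assms(1), where K=1])
     (use assms(2) in \<open>auto intro: always_eventually order_trans[OF _ abs_ge_self]\<close>)

lemma qsuminf_eq_suminf: "summable f \<Longrightarrow> qsuminf f = suminf f"
  unfolding qsuminf_def
  by (simp add: quat_eq_iff bounded_linear.suminf[OF bounded_linear_quat_components(1)]
      bounded_linear.suminf[OF bounded_linear_quat_components(2)]
      bounded_linear.suminf[OF bounded_linear_quat_components(3)]
      bounded_linear.suminf[OF bounded_linear_quat_components(4)])

lemma qcnj_simps [simp]:
  "qcnj 0 = 0" "qcnj 1 = 1" "qcnj (a + b) = qcnj a + qcnj b" "qcnj (a - b) = qcnj a - qcnj b"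
  "qcnj (- a) = - qcnj a" "qcnj (qcnj a) = a" "qcnj (a * b) = qcnj b * qcnj a"
  by (simp_all add: qcnj_def quat_eq_iff algebra_simps)

lemma qcnj_components [simp]:
  "qRe (qcnj q) = qRe q" "qI (qcnj q) = - qI q" "qJ (qcnj q) = - qJ q" "qK (qcnj q) = - qK q"
  by (simp_all add: qcnj_def)

lemma qcnj_sum: "qcnj (sum f A) = (\<Sum>x\<in>A. qcnj (f x))"
  by (induct A rule: infinite_finite_induct) auto

lemma norm_qcnj [simp]: "norm (qcnj q) = norm q"
  by (simp add: norm_quat_def qnorm2_def)

lemma norm_qreal [simp]: "norm (qreal t) = \<bar>t\<bar>"
  by (simp add: qreal_def norm_quat_def qnorm2_def)

lemma bounded_linear_qcnj: "bounded_linear qcnj"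
  by (rule bounded_linear_intro[where K=1]) (auto simp: quat_eq_iff)

section \<open>Quaternionic matrices and vectors\<close>

lemma index_mult_mat_sum:
  assumes "A \<in> carrier_mat n k" "B \<in> carrier_mat k m" "i < n" "j < m"
  shows "(A * B) $$ (i,j) = (\<Sum>l<k. A $$ (i,l) * B $$ (l,j))"
  using assms by (auto simp: scalar_prod_def atLeast0LessThan intro!: sum.cong)

lemma index_mult_mat_vec_sum:
  assumes "A \<in> carrier_mat n k" "v \<in> carrier_vec k" "i < n"
  shows "(A *\<^sub>v v) $ i = (\<Sum>l<k. A $$ (i,l) * v $ l)"
  using assms by (auto simp: scalar_prod_def atLeast0LessThan intro!: sum.cong)

lemma index_mult_mat_vec_unit_vec:
  fixes A :: "'a :: semiring_1 mat"
  assumes "A \<in> carrier_mat n m" "i < n" "k < m"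
  shows "(A *\<^sub>v unit_vec m k) $ i = A $$ (i,k)"
  using assms by auto

lemma mult_mat_vec_zero_vec [simp]: "A \<in> carrier_mat n m \<Longrightarrow> A *\<^sub>v 0\<^sub>v m = 0\<^sub>v n"
  by (intro eq_vecI) (auto simp: scalar_prod_def)

lemma mat_adj_carrier [simp]: "A \<in> carrier_mat n m \<Longrightarrow> mat_adj A \<in> carrier_mat m n"
  by (auto simp: mat_adj_def)

lemma mat_adj_dims [simp]: "dim_row (mat_adj A) = dim_col A" "dim_col (mat_adj A) = dim_row A"
  by (auto simp: mat_adj_def)

lemma index_mat_adj [simp]:
  "i < dim_col A \<Longrightarrow> j < dim_row A \<Longrightarrow> mat_adj A $$ (i,j) = qcnj (A $$ (j,i))"
  by (auto simp: mat_adj_def)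

lemma mat_adj_adj [simp]: "mat_adj (mat_adj A) = A"
  by (intro eq_matI) auto

lemma mat_adj_mult:
  assumes A: "A \<in> carrier_mat n k" and B: "B \<in> carrier_mat k m"
  shows "mat_adj (A * B) = mat_adj B * mat_adj A"
proof (rule eq_matI)
  fix i j assume "i < dim_row (mat_adj B * mat_adj A)" "j < dim_col (mat_adj B * mat_adj A)"
  then have ij: "i < m" "j < n" using A B by auto
  have "mat_adj (A * B) $$ (i,j) = qcnj ((A * B) $$ (j,i))"
    using A B ij by simp
  also have "\<dots> = (\<Sum>l<k. qcnj (B $$ (l,i)) * qcnj (A $$ (j,l)))"
    by (simp only: index_mult_mat_sum[OF A B ij(2,1)] qcnj_sum qcnj_simps)
  also have "\<dots> = (mat_adj B * mat_adj A) $$ (i,j)"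
    using A B ij by (subst index_mult_mat_sum[of _ m k _ n]) auto
  finally show "mat_adj (A * B) $$ (i, j) = (mat_adj B * mat_adj A) $$ (i, j)" .
qed (use A B in auto)

lemma mat_adj_four_block_mat:
  assumes "A \<in> carrier_mat n1 m1" "B \<in> carrier_mat n1 m2" "C \<in> carrier_mat n2 m1" "D \<in> carrier_mat n2 m2"
  shows "mat_adj (four_block_mat A B C D) = four_block_mat (mat_adj A) (mat_adj C) (mat_adj B) (mat_adj D)"
  using assms by (intro eq_matI) auto

definition qinner :: "quat vec \<Rightarrow> quat vec \<Rightarrow> quat" where
  "qinner v w = (\<Sum>i<dim_vec v. qcnj (v $ i) * w $ i)"

lemma qinner_zero_left [simp]: "qinner (0\<^sub>v n) w = 0"
  by (simp add: qinner_def)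

lemma qinner_mult_mat_vec_left:
  assumes M: "M \<in> carrier_mat n m" and v: "v \<in> carrier_vec m" and w: "w \<in> carrier_vec n"
  shows "qinner (M *\<^sub>v v) w = qinner v (mat_adj M *\<^sub>v w)"
proof -
  have "qinner (M *\<^sub>v v) w = (\<Sum>i<n. \<Sum>l<m. qcnj (v $ l) * (qcnj (M $$ (i,l)) * w $ i))"
    using M v by (simp del: index_mult_mat_vec
        add: qinner_def index_mult_mat_vec_sum qcnj_sum sum_distrib_right mult.assoc)
  also have "\<dots> = (\<Sum>l<m. \<Sum>i<n. qcnj (v $ l) * (qcnj (M $$ (i,l)) * w $ i))"
    by (rule sum.swap)
  also have "\<dots> = qinner v (mat_adj M *\<^sub>v w)"
    using M v w by (simp del: index_mult_mat_vec
        add: qinner_def index_mult_mat_vec_sum[of _ m n] sum_distrib_left)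
  finally show ?thesis .
qed

lemma qinner_isometry:
  assumes M: "M \<in> carrier_mat m n" and iso: "mat_adj M * M = 1\<^sub>m n"
    and v: "v \<in> carrier_vec n" and w: "w \<in> carrier_vec n"
  shows "qinner (M *\<^sub>v v) (M *\<^sub>v w) = qinner v w"
proof -
  have "qinner (M *\<^sub>v v) (M *\<^sub>v w) = qinner v ((mat_adj M * M) *\<^sub>v w)"
    using M v w by (simp add: qinner_mult_mat_vec_left assoc_mult_mat_vec[of _ n m _ n])
  then show ?thesis using iso w by simp
qed

lemma qinner_append:
  assumes "v \<in> carrier_vec n" "v' \<in> carrier_vec n" "w \<in> carrier_vec m" "w' \<in> carrier_vec m"
  shows "qinner (v @\<^sub>v w) (v' @\<^sub>v w') = qinner v v' + qinner w w'"
proof -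
  have split: "(\<Sum>i<n + m. f i) = (\<Sum>i<n. f i) + (\<Sum>i<m. f (n + i))" for f :: "nat \<Rightarrow> quat"
    by (induct m) (simp_all add: add.assoc)
  show ?thesis
    using assms by (simp add: qinner_def split)
qed

lemma vnorm2_eq_qinner: "vnorm2 v = qRe (qinner v v)"
  by (simp add: vnorm2_def qinner_def qRe_sum qnorm2_def power2_eq_square)

lemma vnorm2_nonneg: "0 \<le> vnorm2 v"
  by (simp add: vnorm2_def qnorm2_def sum_nonneg)

lemma vnorm2_zero_vec [simp]: "vnorm2 (0\<^sub>v n) = 0"
  by (simp add: vnorm2_def qnorm2_def)

lemma vnorm2_unit_vec: "k < n \<Longrightarrow> vnorm2 (unit_vec n k :: quat vec) = 1"
proof -
  assume k: "k < n"
  have "vnorm2 (unit_vec n k :: quat vec) = (\<Sum>i<n. if i = k then 1 else 0)"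
    using k unfolding vnorm2_def by (intro sum.cong) (auto simp: qnorm2_def)
  then show ?thesis
    using k by simp
qed

lemma qnorm2_index_le_vnorm2: "i < dim_vec v \<Longrightarrow> qnorm2 (v $ i) \<le> vnorm2 v"
  unfolding vnorm2_def by (rule member_le_sum) (auto simp: qnorm2_def)

lemma norm_index_le_sqrt_vnorm2: "i < dim_vec v \<Longrightarrow> norm (v $ i) \<le> sqrt (vnorm2 v)"
  using qnorm2_index_le_vnorm2 by (simp add: qnorm2_eq_norm_sq real_le_rsqrt)

lemma vnorm2_add_le: "dim_vec v = dim_vec w \<Longrightarrow> vnorm2 (v + w) \<le> 2 * vnorm2 v + 2 * vnorm2 w"
proof -
  have "qnorm2 (a + b) \<le> 2 * qnorm2 a + 2 * qnorm2 b" for a b :: quat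
    unfolding qnorm2_def
    by (simp add: power2_sum) (smt (verit) sum_squares_bound)
  then show "dim_vec v = dim_vec w \<Longrightarrow> ?thesis"
    by (simp add: vnorm2_def sum_distrib_left sum.distrib[symmetric] sum_mono)
qed

lemma pow_mat_Suc_left: "A \<in> carrier_mat n n \<Longrightarrow> A ^\<^sub>m Suc k = A * A ^\<^sub>m k"
proof (induct k)
  case (Suc k)
  then have "A ^\<^sub>m Suc (Suc k) = A * (A ^\<^sub>m k * A)"
    by (simp add: assoc_mult_mat[of _ n n _ n _ n])
  then show ?case by simp
qed simp

lemma mat_adj_pow:
  assumes A: "A \<in> carrier_mat n n"
  shows "mat_adj (A ^\<^sub>m k) = mat_adj A ^\<^sub>m k"
proof (induct k)
  case 0
  show ?case using A by (intro eq_matI) auto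
next
  case (Suc k)
  have "mat_adj (A ^\<^sub>m Suc k) = mat_adj A * mat_adj (A ^\<^sub>m k)"
    using A by (simp add: mat_adj_mult[of _ n n _ n])
  then show ?case
    using A Suc by (simp add: pow_mat_Suc_left[of "mat_adj A" n] del: pow_mat.simps)
qed

lemma col_mat_adj:
  "i < dim_row M \<Longrightarrow> col (mat_adj M) i = vec (dim_col M) (\<lambda>k. qcnj (M $$ (i,k)))"
  by (intro eq_vecI) auto

lemma col_mat_adj_mult:
  assumes "X \<in> carrier_mat m n" "A \<in> carrier_mat n p" "i < m"
  shows "col (mat_adj (X * A)) i = mat_adj A *\<^sub>v col (mat_adj X) i"
  using assms by (simp add: mat_adj_mult[OF assms(1,2)]
      col_mult2[OF mat_adj_carrier[OF assms(2)] mat_adj_carrier[OF assms(1)] assms(3)])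

lemma col_mat_adj_add:
  assumes "X \<in> carrier_mat m n" "Y \<in> carrier_mat m n" "i < m"
  shows "col (mat_adj (X + Y)) i = col (mat_adj X) i + col (mat_adj Y) i"
  using assms by (intro eq_vecI) auto

lemma index_mult_mat_adj_sum:
  assumes "M \<in> carrier_mat n q" "M' \<in> carrier_mat n' q" "i < n" "j < n'"
  shows "(M * mat_adj M') $$ (i,j) = (\<Sum>l<q. M $$ (i,l) * qcnj (M' $$ (j,l)))"
proof -
  have "(M * mat_adj M') $$ (i,j) = (\<Sum>l<q. M $$ (i,l) * mat_adj M' $$ (l,j))"
    using assms by (intro index_mult_mat_sum) auto
  also have "\<dots> = (\<Sum>l<q. M $$ (i,l) * qcnj (M' $$ (j,l)))"
    using assms by (intro sum.cong) auto
  finally show ?thesis .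
qed

lemma index_mult_mat_adj:
  assumes "M \<in> carrier_mat n q" "M' \<in> carrier_mat n' q" "i < n" "j < n'"
  shows "(M * mat_adj M') $$ (i,j) = qinner (col (mat_adj M) i) (col (mat_adj M') j)"
  using assms carrier_matD[OF assms(1)] carrier_matD[OF assms(2)]
  by (simp add: index_mult_mat_adj_sum[OF assms] qinner_def col_mat_adj)

lemma smult_one_mult:
  fixes M :: "'a :: ring_1 mat"
  assumes "M \<in> carrier_mat n m"
  shows "(a \<cdot>\<^sub>m 1\<^sub>m n) * M = a \<cdot>\<^sub>m M"
proof (rule eq_matI)
  fix i j assume "i < dim_row (a \<cdot>\<^sub>m M)" "j < dim_col (a \<cdot>\<^sub>m M)"
  with assms have ij: "i < n" "j < m" by auto
  have "((a \<cdot>\<^sub>m 1\<^sub>m n) * M) $$ (i,j) = (\<Sum>l<n. (a \<cdot>\<^sub>m 1\<^sub>m n) $$ (i,l) * M $$ (l,j))"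
    using assms ij by (intro index_mult_mat_sum) auto
  also have "\<dots> = (\<Sum>l<n. (if i = l then a else 0) * M $$ (l,j))"
    using ij by (intro sum.cong) auto
  also have "\<dots> = a * M $$ (i,j)"
    using ij(1) by (simp add: if_distrib[of "\<lambda>c. c * _"] cong: if_cong)
  finally show "((a \<cdot>\<^sub>m 1\<^sub>m n) * M) $$ (i,j) = (a \<cdot>\<^sub>m M) $$ (i,j)"
    using assms ij by simp
qed (use assms in auto)

section \<open>Unitary colligations\<close>

lemma isometric_colligation_qinner:
  assumes A: "A \<in> carrier_mat n1 m1" and B: "B \<in> carrier_mat n1 m2"
    and C: "C \<in> carrier_mat n2 m1" and D: "D \<in> carrier_mat n2 m2"
    and iso: "mat_adj (four_block_mat A B C D) * four_block_mat A B C D = 1\<^sub>m (m1 + m2)"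
    and x: "x \<in> carrier_vec m1" "x' \<in> carrier_vec m1"
    and u: "u \<in> carrier_vec m2" "u' \<in> carrier_vec m2"
  shows "qinner (A *\<^sub>v x + B *\<^sub>v u) (A *\<^sub>v x' + B *\<^sub>v u')
      + qinner (C *\<^sub>v x + D *\<^sub>v u) (C *\<^sub>v x' + D *\<^sub>v u') = qinner x x' + qinner u u'"
proof -
  let ?V = "four_block_mat A B C D"
  have "qinner (?V *\<^sub>v (x @\<^sub>v u)) (?V *\<^sub>v (x' @\<^sub>v u')) = qinner (x @\<^sub>v u) (x' @\<^sub>v u')"
    using A D iso x u by (intro qinner_isometry) auto
  then show ?thesis
    using A B C D x u by (simp add: four_block_mat_mult_vec qinner_append[of _ n1 _ _ n2] qinner_append[OF x u])
qed

locale unitary_colligation =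
  fixes A B C D :: "quat mat" and N r :: nat
  assumes A: "A \<in> carrier_mat N N" and B: "B \<in> carrier_mat N r"
    and C: "C \<in> carrier_mat r N" and D: "D \<in> carrier_mat r r"
    and unitary: "qunitary (four_block_mat A B C D)"
begin

lemmas [simp] = A B C D

lemma adj_carriers [simp]:
  "mat_adj A \<in> carrier_mat N N" "mat_adj B \<in> carrier_mat r N"
  "mat_adj C \<in> carrier_mat N r" "mat_adj D \<in> carrier_mat r r"
  using A B C D by auto

lemma pow_carriers [simp]: "A ^\<^sub>m p \<in> carrier_mat N N" "mat_adj A ^\<^sub>m p \<in> carrier_mat N N"
  using A by auto

lemma mult_pow_carrier [simp]: "C * A ^\<^sub>m p \<in> carrier_mat r N"
  by (rule mult_carrier_mat[OF C pow_carrier_mat[OF A]])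

lemma pow_mult_carrier [simp]: "A ^\<^sub>m p * B \<in> carrier_mat N r"
  by (rule mult_carrier_mat[OF pow_carrier_mat[OF A] B])

lemma dims [simp]: "dim_row A = N" "dim_col A = N" "dim_row B = N" "dim_col B = r"
  "dim_row C = r" "dim_col C = N" "dim_row D = r" "dim_col D = r"
  using carrier_matD[OF A] carrier_matD[OF B] carrier_matD[OF C] carrier_matD[OF D] by auto

lemma colligation_qinner:
  assumes "x \<in> carrier_vec N" "x' \<in> carrier_vec N" "u \<in> carrier_vec r" "u' \<in> carrier_vec r"
  shows "qinner (A *\<^sub>v x + B *\<^sub>v u) (A *\<^sub>v x' + B *\<^sub>v u')
      + qinner (C *\<^sub>v x + D *\<^sub>v u) (C *\<^sub>v x' + D *\<^sub>v u') = qinner x x' + qinner u u'"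
  using unitary A D unfolding qunitary_def
  by (intro isometric_colligation_qinner[OF A B C D _ assms]) simp

lemma adjoint_colligation_qinner:
  assumes "y \<in> carrier_vec N" "y' \<in> carrier_vec N" "v \<in> carrier_vec r" "v' \<in> carrier_vec r"
  shows "qinner (mat_adj A *\<^sub>v y + mat_adj C *\<^sub>v v) (mat_adj A *\<^sub>v y' + mat_adj C *\<^sub>v v')
      + qinner (mat_adj B *\<^sub>v y + mat_adj D *\<^sub>v v) (mat_adj B *\<^sub>v y' + mat_adj D *\<^sub>v v')
    = qinner y y' + qinner v v'"
proof (rule isometric_colligation_qinner[OF _ _ _ _ _ assms])
  let ?V = "four_block_mat A B C D"
  have "four_block_mat (mat_adj A) (mat_adj C) (mat_adj B) (mat_adj D) = mat_adj ?V"
    by (rule mat_adj_four_block_mat[symmetric, OF A B C D])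
  moreover have "?V * mat_adj ?V = 1\<^sub>m (N + r)"
    using unitary A D unfolding qunitary_def by simp
  ultimately show "mat_adj (four_block_mat (mat_adj A) (mat_adj C) (mat_adj B) (mat_adj D))
      * four_block_mat (mat_adj A) (mat_adj C) (mat_adj B) (mat_adj D) = 1\<^sub>m (N + r)"
    by simp
qed (fact adj_carriers)+

lemma vnorm2_contraction:
  assumes x: "x \<in> carrier_vec N"
  shows "vnorm2 (A *\<^sub>v x) + vnorm2 (C *\<^sub>v x) = vnorm2 x"
proof -
  have "qinner (A *\<^sub>v x) (A *\<^sub>v x) + qinner (C *\<^sub>v x) (C *\<^sub>v x) = qinner x x"
    using colligation_qinner[OF x x zero_carrier_vec zero_carrier_vec] x
    by (simp add: mult_mat_vec_zero_vec[OF B] mult_mat_vec_zero_vec[OF D]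
        mult_mat_vec_carrier[OF A x] mult_mat_vec_carrier[OF C x])
  then show ?thesis
    unfolding vnorm2_eq_qinner by (metis quat_components(9))
qed

lemma vnorm2_adjoint_contraction:
  assumes y: "y \<in> carrier_vec N"
  shows "vnorm2 (mat_adj A *\<^sub>v y) + vnorm2 (mat_adj B *\<^sub>v y) = vnorm2 y"
proof -
  have "qinner (mat_adj A *\<^sub>v y) (mat_adj A *\<^sub>v y) + qinner (mat_adj B *\<^sub>v y) (mat_adj B *\<^sub>v y)
      = qinner y y"
    using adjoint_colligation_qinner[OF y y zero_carrier_vec zero_carrier_vec] y
    by (simp add: mult_mat_vec_zero_vec[OF adj_carriers(3)] mult_mat_vec_zero_vec[OF adj_carriers(4)]
        mult_mat_vec_carrier[OF adj_carriers(1) y] mult_mat_vec_carrier[OF adj_carriers(2) y])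
  then show ?thesis
    unfolding vnorm2_eq_qinner by (metis quat_components(9))
qed

lemma vnorm2_pow_le: "x \<in> carrier_vec N \<Longrightarrow> vnorm2 (A ^\<^sub>m p *\<^sub>v x) \<le> vnorm2 x"
proof (induct p arbitrary: x)
  case (Suc p x)
  have "vnorm2 (A ^\<^sub>m Suc p *\<^sub>v x) = vnorm2 (A ^\<^sub>m p *\<^sub>v (A *\<^sub>v x))"
    using Suc.prems by (simp add: assoc_mult_mat_vec[of _ N N _ N])
  also have "\<dots> \<le> vnorm2 (A *\<^sub>v x)"
    using Suc.hyps mult_mat_vec_carrier[OF A Suc.prems] by blast
  also have "\<dots> \<le> vnorm2 x"
    using vnorm2_contraction[OF Suc.prems] vnorm2_nonneg[of "C *\<^sub>v x"] by simp
  finally show ?case .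
qed (use A in simp)

lemma norm_index_mult_pow_le_one:
  assumes i: "i < r" and k: "k < N"
  shows "norm ((C * A ^\<^sub>m p) $$ (i,k)) \<le> 1"
proof -
  let ?e = "unit_vec N k :: quat vec"
  have "(C * A ^\<^sub>m p) $$ (i,k) = ((C * A ^\<^sub>m p) *\<^sub>v ?e) $ i"
    using A C i k by (intro index_mult_mat_vec_unit_vec[symmetric]) auto
  then have "qnorm2 ((C * A ^\<^sub>m p) $$ (i,k)) = qnorm2 ((C *\<^sub>v (A ^\<^sub>m p *\<^sub>v ?e)) $ i)"
    using A C by (simp add: assoc_mult_mat_vec[of _ r N _ N])
  also have "\<dots> \<le> vnorm2 (C *\<^sub>v (A ^\<^sub>m p *\<^sub>v ?e))"
    using C i by (intro qnorm2_index_le_vnorm2) simp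
  also have "\<dots> \<le> vnorm2 (A ^\<^sub>m p *\<^sub>v ?e)"
    using vnorm2_contraction[of "A ^\<^sub>m p *\<^sub>v ?e"] vnorm2_nonneg[of "A *\<^sub>v (A ^\<^sub>m p *\<^sub>v ?e)"]
      mult_mat_vec_carrier[OF pow_carriers(1) unit_vec_carrier]
    by simp
  also have "\<dots> \<le> vnorm2 ?e"
    by (intro vnorm2_pow_le) simp
  also have "\<dots> = 1"
    using k by (rule vnorm2_unit_vec)
  finally show ?thesis by (simp add: qnorm2_eq_norm_sq power_le_one_iff)
qed

lemma summable_vnorm2_adjoint_orbit:
  assumes y: "y \<in> carrier_vec N"
  shows "summable (\<lambda>m. vnorm2 (mat_adj B *\<^sub>v (mat_adj A ^\<^sub>m m *\<^sub>v y)))"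
proof (rule summableI_nonneg_bounded[where x="vnorm2 y"])
  fix n
  let ?z = "\<lambda>m. mat_adj A ^\<^sub>m m *\<^sub>v y"
  have "?z (Suc m) = mat_adj A *\<^sub>v ?z m" for m
    using y by (simp add: pow_mat_Suc_left[of "mat_adj A" N] assoc_mult_mat_vec[of _ N N _ N] del: pow_mat.simps)
  then have "vnorm2 (mat_adj B *\<^sub>v ?z m) = vnorm2 (?z m) - vnorm2 (?z (Suc m))" for m
    using vnorm2_adjoint_contraction[of "?z m"] mult_mat_vec_carrier[OF pow_carriers(2) y]
    by (simp del: pow_mat.simps)
  then have "(\<Sum>m<n. vnorm2 (mat_adj B *\<^sub>v ?z m)) = (\<Sum>m<n. vnorm2 (?z m) - vnorm2 (?z (Suc m)))"
    by (intro sum.cong) simp_all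
  also have "\<dots> = vnorm2 (?z 0) - vnorm2 (?z n)"
    by (rule sum_lessThan_telescope')
  finally have "(\<Sum>m<n. vnorm2 (mat_adj B *\<^sub>v ?z m)) = vnorm2 y - vnorm2 (?z n)"
    using y by simp
  then show "(\<Sum>m<n. vnorm2 (mat_adj B *\<^sub>v ?z m)) \<le> vnorm2 y"
    using y vnorm2_nonneg[of "?z n"] by simp
qed (rule vnorm2_nonneg)

lemma index_pow_mult_eq_adjoint_orbit:
  assumes i: "i < N" and l: "l < r"
  shows "(A ^\<^sub>m m * B) $$ (i,l) = qcnj ((mat_adj B *\<^sub>v (mat_adj A ^\<^sub>m m *\<^sub>v unit_vec N i)) $ l)"
proof -
  have "(A ^\<^sub>m m * B) $$ (i,l) = qcnj (mat_adj (A ^\<^sub>m m * B) $$ (l,i))"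
    using i l carrier_matD[OF pow_mult_carrier] by simp
  also have "\<dots> = qcnj ((mat_adj B * mat_adj A ^\<^sub>m m) $$ (l,i))"
    by (simp only: mat_adj_mult[of _ N N _ r] mat_adj_pow[OF A] pow_carrier_mat A B)
  also have "\<dots> = qcnj (((mat_adj B * mat_adj A ^\<^sub>m m) *\<^sub>v unit_vec N i) $ l)"
    using i l by (subst index_mult_mat_vec_unit_vec[of _ r N]) auto
  finally show ?thesis
    by (simp add: assoc_mult_mat_vec[of _ r N _ N])
qed

lemma index_pow_mult_tendsto_zero:
  assumes i: "i < N" and l: "l < r"
  shows "(\<lambda>m. (A ^\<^sub>m m * B) $$ (i,l)) \<longlonglongrightarrow> 0"
proof (rule tendsto_zero_norm_bound)
  let ?z = "\<lambda>m. mat_adj B *\<^sub>v (mat_adj A ^\<^sub>m m *\<^sub>v unit_vec N i)"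
  show "(\<lambda>m. sqrt (vnorm2 (?z m))) \<longlonglongrightarrow> 0"
    using tendsto_real_sqrt[OF summable_LIMSEQ_zero[OF summable_vnorm2_adjoint_orbit]] by simp
  show "norm ((A ^\<^sub>m m * B) $$ (i,l)) \<le> sqrt (vnorm2 (?z m))" for m
    using norm_index_le_sqrt_vnorm2[of l "?z m"] l
    by (simp add: index_pow_mult_eq_adjoint_orbit[OF i l])
qed

end

section \<open>The state-space realization of \<open>M\<^sub>B\<close>\<close>

context unitary_colligation
begin

primrec state :: "(nat \<Rightarrow> quat vec) \<Rightarrow> nat \<Rightarrow> quat vec" where
  "state u 0 = 0\<^sub>v N"
| "state u (Suc k) = A *\<^sub>v state u k + B *\<^sub>v u k"

lemma state_carrier: "(\<And>k. u k \<in> carrier_vec r) \<Longrightarrow> state u k \<in> carrier_vec N"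
  by (induct k) (auto intro!: add_carrier_vec mult_mat_vec_carrier[OF A] mult_mat_vec_carrier[OF B])

lemma mult_mat_vec_state:
  assumes u: "\<And>k. u k \<in> carrier_vec r"
  shows "M \<in> carrier_mat m N \<Longrightarrow>
    M *\<^sub>v state u k = vec m (\<lambda>i. \<Sum>j<k. ((M * A ^\<^sub>m (k - 1 - j) * B) *\<^sub>v u j) $ i)"
proof (induct k arbitrary: M m)
  case 0
  then show ?case by (intro eq_vecI) auto
next
  case (Suc k)
  have MA: "M * A \<in> carrier_mat m N" using Suc.prems by simp
  have s: "state u k \<in> carrier_vec N"
    by (rule state_carrier[of u, OF u])
  have "M *\<^sub>v state u (Suc k) = (M * A) *\<^sub>v state u k + (M * B) *\<^sub>v u k"
    using Suc.prems s u
    by (simp add: mult_add_distrib_mat_vec[OF Suc.prems mult_mat_vec_carrier[OF A s]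
        mult_mat_vec_carrier[OF B u]] assoc_mult_mat_vec[of _ m N _ N] assoc_mult_mat_vec[of _ m N _ r])
  also have "\<dots> = vec m (\<lambda>i. \<Sum>j<Suc k. ((M * A ^\<^sub>m (Suc k - 1 - j) * B) *\<^sub>v u j) $ i)"
  proof (rule eq_vecI)
    fix i assume "i < dim_vec (vec m (\<lambda>i. \<Sum>j<Suc k. ((M * A ^\<^sub>m (Suc k - 1 - j) * B) *\<^sub>v u j) $ i))"
    then have i: "i < m" by simp
    have "M * A * A ^\<^sub>m (k - 1 - j) = M * A ^\<^sub>m (Suc k - 1 - j)" if "j < k" for j
    proof -
      have "Suc k - 1 - j = Suc (k - 1 - j)" using that by simp
      then show ?thesis
        using Suc.prems by (simp add: pow_mat_Suc_left[OF A] assoc_mult_mat[of _ m N _ N _ N] del: pow_mat.simps)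
    qed
    then show "((M * A) *\<^sub>v state u k + (M * B) *\<^sub>v u k) $ i
      = vec m (\<lambda>i. \<Sum>j<Suc k. ((M * A ^\<^sub>m (Suc k - 1 - j) * B) *\<^sub>v u j) $ i) $ i"
      using Suc.hyps[OF MA] Suc.prems i u by simp
  qed (use Suc.prems u in simp)
  finally show ?case .
qed

lemma MB_eq_state_output:
  assumes u: "\<And>k. u k \<in> carrier_vec r"
  shows "MB A B C D r u k = C *\<^sub>v state u k + D *\<^sub>v u k"
proof (rule eq_vecI)
  fix i assume "i < dim_vec (C *\<^sub>v state u k + D *\<^sub>v u k)"
  then have i: "i < r" by simp
  have "MB A B C D r u k $ i = (D *\<^sub>v u k) $ i + (\<Sum>j<k. (bcoef A B C D (Suc j) *\<^sub>v u (k - Suc j)) $ i)"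
    using i by (simp add: MB_def sum.atMost_shift bcoef_def)
  also have "(\<Sum>j<k. (bcoef A B C D (Suc j) *\<^sub>v u (k - Suc j)) $ i)
      = (\<Sum>j<k. ((C * A ^\<^sub>m (k - 1 - (k - Suc j)) * B) *\<^sub>v u (k - Suc j)) $ i)"
    by (intro sum.cong) (auto simp: bcoef_def Suc_diff_Suc)
  also have "\<dots> = (\<Sum>j<k. ((C * A ^\<^sub>m (k - 1 - j) * B) *\<^sub>v u j) $ i)"
    by (rule sum.nat_diff_reindex)
  also have "\<dots> = (C *\<^sub>v state u k) $ i"
    using mult_mat_vec_state[of u, OF u C] i by simp
  finally show "MB A B C D r u k $ i = (C *\<^sub>v state u k + D *\<^sub>v u k) $ i"
    using i by simp
qed (simp add: MB_def)

lemma energy_balance: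
  assumes u: "\<And>k. u k \<in> carrier_vec r"
  shows "(\<Sum>k<K. vnorm2 (MB A B C D r u k)) + vnorm2 (state u K) = (\<Sum>k<K. vnorm2 (u k))"
proof (induct K)
  case (Suc K)
  have "vnorm2 (state u (Suc K)) + vnorm2 (MB A B C D r u K) = vnorm2 (state u K) + vnorm2 (u K)"
    using colligation_qinner[OF state_carrier[of u, OF u] state_carrier[of u, OF u] u u]
    unfolding MB_eq_state_output[OF u] state.simps vnorm2_eq_qinner by (metis quat_components(9))
  then show ?case using Suc by simp
qed simp

lemma vnorm2_state_le_suminf:
  assumes u: "\<And>k. u k \<in> carrier_vec r" and sm: "summable (\<lambda>k. vnorm2 (u k))"
  shows "vnorm2 (state u K) \<le> (\<Sum>k. vnorm2 (u k))"
proof -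
  have "vnorm2 (state u K) \<le> (\<Sum>k<K. vnorm2 (u k))"
    using energy_balance[of u K, OF u] sum_nonneg[of "{..<K}" "\<lambda>k. vnorm2 (MB A B C D r u k)"]
      vnorm2_nonneg by fastforce
  also have "\<dots> \<le> (\<Sum>k. vnorm2 (u k))"
    by (rule sum_le_suminf[OF sm]) (simp_all add: vnorm2_nonneg)
  finally show ?thesis .
qed

lemma state_add:
  assumes u: "\<And>k. u k \<in> carrier_vec r" and v: "\<And>k. v k \<in> carrier_vec r"
  shows "state (\<lambda>k. u k + v k) K = state u K + state v K"
proof (induct K)
  case (Suc K)
  have su: "state u K \<in> carrier_vec N" and sv: "state v K \<in> carrier_vec N"
    using state_carrier[of u, OF u] state_carrier[of v, OF v] by auto
  show ?case
    using Suc su sv u[of K] v[of K]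
    by (intro eq_vecI) (simp_all add: mult_add_distrib_mat_vec[OF A su sv]
        mult_add_distrib_mat_vec[OF B u v])
qed simp

lemma index_pow_mult_vec_tendsto_zero:
  assumes i: "i < N" and w: "w \<in> carrier_vec r"
  shows "(\<lambda>m. ((A ^\<^sub>m m * B) *\<^sub>v w) $ i) \<longlonglongrightarrow> 0"
proof -
  have "((A ^\<^sub>m m * B) *\<^sub>v w) $ i = (\<Sum>l<r. (A ^\<^sub>m m * B) $$ (i,l) * w $ l)" for m
    by (rule index_mult_mat_vec_sum[OF pow_mult_carrier w i])
  then show ?thesis
    by (simp only:) (intro tendsto_null_sum tendsto_mult_left_zero index_pow_mult_tendsto_zero i, simp)
qed

lemma state_tendsto_zero_finite_support:
  assumes u: "\<And>k. u k \<in> carrier_vec r" and fin: "\<And>k. J \<le> k \<Longrightarrow> u k = 0\<^sub>v r"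
  shows "(\<lambda>K. vnorm2 (state u K)) \<longlonglongrightarrow> 0"
proof -
  have entry: "(\<lambda>K. state u K $ i) \<longlonglongrightarrow> 0" if i: "i < N" for i
  proof -
    have "(\<Sum>j<J. ((A ^\<^sub>m (K - Suc j) * B) *\<^sub>v u j) $ i) = state u K $ i" if "J \<le> K" for K
    proof -
      have "state u K $ i = (1\<^sub>m N *\<^sub>v state u K) $ i"
        using state_carrier[of u, OF u] by simp
      also have "\<dots> = (\<Sum>j<K. ((A ^\<^sub>m (K - Suc j) * B) *\<^sub>v u j) $ i)"
        using mult_mat_vec_state[of u, OF u one_carrier_mat] i by simp
      also have "\<dots> = (\<Sum>j<J. ((A ^\<^sub>m (K - Suc j) * B) *\<^sub>v u j) $ i)"
        using that i fin by (intro sum.mono_neutral_right) (auto simp: mult_mat_vec_zero_vec[OF pow_mult_carrier])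
      finally show ?thesis ..
    qed
    then have "\<forall>\<^sub>F K in sequentially. (\<Sum>j<J. ((A ^\<^sub>m (K - Suc j) * B) *\<^sub>v u j) $ i) = state u K $ i"
      by (rule eventually_sequentiallyI)
    moreover have "(\<lambda>K. \<Sum>j<J. ((A ^\<^sub>m (K - Suc j) * B) *\<^sub>v u j) $ i) \<longlonglongrightarrow> 0"
    proof (rule tendsto_null_sum)
      fix j
      show "(\<lambda>K. ((A ^\<^sub>m (K - Suc j) * B) *\<^sub>v u j) $ i) \<longlonglongrightarrow> 0"
        using filterlim_compose[OF index_pow_mult_vec_tendsto_zero[OF i u] filterlim_minus_const_nat_at_top]
        by (simp add: o_def)
    qed
    ultimately show ?thesis
      by (rule Lim_transform_eventually[rotated])
  qed
  have "vnorm2 (state u K) = (\<Sum>i<N. (norm (state u K $ i))\<^sup>2)" for K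
    using carrier_vecD[OF state_carrier[of u K, OF u]] by (simp add: vnorm2_def qnorm2_eq_norm_sq)
  moreover have "(\<lambda>K. \<Sum>i<N. (norm (state u K $ i))\<^sup>2) \<longlonglongrightarrow> 0"
    by (intro tendsto_null_sum tendsto_null_power tendsto_norm_zero entry) simp_all
  ultimately show ?thesis
    by simp
qed

lemma state_tendsto_zero:
  assumes u: "\<And>k. u k \<in> carrier_vec r" and sm: "summable (\<lambda>k. vnorm2 (u k))"
  shows "(\<lambda>K. vnorm2 (state u K)) \<longlonglongrightarrow> 0"
proof (rule LIMSEQ_I)
  fix e :: real assume e: "0 < e"
  obtain J where J: "norm (\<Sum>k. vnorm2 (u (k + J))) < e / 4"
    using suminf_exist_split[OF _ sm, of "e / 4"] e by auto
  define u1 where "u1 k = (if k < J then u k else 0\<^sub>v r)" for k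
  define u2 where "u2 k = (if k < J then 0\<^sub>v r else u k)" for k
  have u1: "u1 k \<in> carrier_vec r" and u2: "u2 k \<in> carrier_vec r" for k
    using u by (simp_all add: u1_def u2_def)
  have split: "state u K = state u1 K + state u2 K" for K
  proof -
    have "(\<lambda>k. u1 k + u2 k) = u"
      using u by (auto simp: u1_def u2_def)
    then show ?thesis using state_add[of u1 u2, OF u1 u2] by simp
  qed
  have "(\<lambda>K. vnorm2 (state u1 K)) \<longlonglongrightarrow> 0"
    by (rule state_tendsto_zero_finite_support[of u1 J, OF u1]) (simp add: u1_def)
  then obtain K0 where K0: "\<And>K. K0 \<le> K \<Longrightarrow> norm (vnorm2 (state u1 K) - 0) < e / 4"
    using LIMSEQ_D[of _ 0 "e / 4"] e by (meson divide_pos_pos zero_less_numeral)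
  have tail: "vnorm2 (state u2 K) < e / 4" for K
  proof -
    have g: "summable (\<lambda>k. vnorm2 (u2 k))"
      by (rule summable_comparison_test'[OF sm]) (auto simp: u2_def vnorm2_nonneg)
    have "vnorm2 (state u2 K) \<le> (\<Sum>k. vnorm2 (u2 k))"
      by (rule vnorm2_state_le_suminf[of u2, OF u2 g])
    also have "\<dots> = (\<Sum>k. vnorm2 (u (k + J)))"
      using suminf_split_initial_segment[OF g, of J] by (simp add: u2_def)
    finally show ?thesis using J by simp
  qed
  show "\<exists>K0. \<forall>K\<ge>K0. norm (vnorm2 (state u K) - 0) < e"
  proof (intro exI allI impI)
    fix K assume "K0 \<le> K"
    have "vnorm2 (state u K) \<le> 2 * vnorm2 (state u1 K) + 2 * vnorm2 (state u2 K)"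
      using split vnorm2_add_le[of "state u1 K" "state u2 K"]
        carrier_vecD[OF state_carrier[of u1 K, OF u1]] carrier_vecD[OF state_carrier[of u2 K, OF u2]]
      by simp
    then show "norm (vnorm2 (state u K) - 0) < e"
      using K0[OF \<open>K0 \<le> K\<close>] tail[of K] vnorm2_nonneg[of "state u K"] by simp
  qed
qed

theorem MB_isometry:
  assumes "u \<in> H2 r"
  shows "MB A B C D r u \<in> H2 r \<and> H2norm2 (MB A B C D r u) = H2norm2 u"
proof -
  have u: "\<And>k. u k \<in> carrier_vec r" and sm: "summable (\<lambda>k. vnorm2 (u k))"
    using assms by (auto simp: H2_def)
  have "(\<lambda>K. \<Sum>k<K. vnorm2 (MB A B C D r u k)) = (\<lambda>K. (\<Sum>k<K. vnorm2 (u k)) - vnorm2 (state u K))"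
  proof
    fix K show "(\<Sum>k<K. vnorm2 (MB A B C D r u k)) = (\<Sum>k<K. vnorm2 (u k)) - vnorm2 (state u K)"
      using energy_balance[of u K, OF u] by linarith
  qed
  moreover have "(\<lambda>K. (\<Sum>k<K. vnorm2 (u k)) - vnorm2 (state u K)) \<longlonglongrightarrow> (\<Sum>k. vnorm2 (u k)) - 0"
    by (intro tendsto_diff summable_LIMSEQ sm state_tendsto_zero[of u, OF u])
  ultimately have "(\<lambda>k. vnorm2 (MB A B C D r u k)) sums H2norm2 u"
    by (simp add: sums_def H2norm2_def)
  then show ?thesis
    by (auto simp: H2_def H2norm2_def MB_def sums_iff)
qed

end

section \<open>The polynomials \<open>P\<^sub>m\<close> on the ellipsoid\<close>

lemma sum_alternating_weights:
  "(\<Sum>j\<le>m. (-1::real) ^ j * (real m - real j + 1)) = (if even m then real m + 2 else real m + 1) / 2"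
proof (induct m)
  case (Suc m)
  have "(\<Sum>j\<le>m. (-1::real) ^ j) = (if even m then 1 else 0)"
    by (induct m) auto
  moreover have "(\<Sum>j\<le>Suc m. (-1::real) ^ j * (real (Suc m) - real j + 1))
      = (\<Sum>j\<le>m. (-1::real) ^ j * (real m - real j + 1)) + (\<Sum>j\<le>m. (-1::real) ^ j) + (-1) ^ Suc m"
    by (simp add: sum.distrib[symmetric] algebra_simps)
  ultimately show ?case
    using Suc by (simp add: field_simps)
qed simp

lemma cT_eq: "cT m = (if even m then 1 / (real m + 1) else 1 / (real m + 2))"
proof -
  have "cT m = 2 / ((real m + 1) * (real m + 2)) * (\<Sum>j\<le>m. (-1::real) ^ j * (real m - real j + 1))"
    unfolding cT_def T_def sum_distrib_left by (intro sum.cong) simp_all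
  also have "\<dots> = (if even m then real m + 2 else real m + 1) / ((real m + 1) * (real m + 2))"
    unfolding sum_alternating_weights by simp
  finally show ?thesis
    by simp
qed

lemma cT_pos: "0 < cT m"
  by (simp add: cT_eq)

lemma inverse_cT_le: "1 / cT m \<le> real m + 2"
  by (simp add: cT_eq)

lemma T_bounds:
  assumes "j \<le> m"
  shows "0 \<le> T m j \<and> T m j \<le> 2 / (real m + 2)"
proof -
  let ?q = "(real m - real j + 1) / (real m + 1)"
  have T: "T m j = 2 / (real m + 2) * ?q"
    by (simp add: T_def)
  have q: "0 \<le> ?q" "?q \<le> 1"
    using assms by simp_all
  have c: "0 \<le> 2 / (real m + 2)"
    by simp
  show ?thesis
    unfolding T using mult_nonneg_nonneg[OF c q(1)] mult_right_le_one_le[OF c q] by blast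
qed

lemma norm_P_le: "norm (P m x) \<le> 2 * (real m + 1) * norm x ^ m"
proof -
  have summand: "norm (qreal (T m j) * x ^ (m - j) * qcnj x ^ j) \<le> 2 / (real m + 2) * norm x ^ m"
    if "j \<le> m" for j
  proof -
    have "norm (qreal (T m j) * x ^ (m - j) * qcnj x ^ j) = T m j * norm x ^ m"
      using that T_bounds[OF that] by (simp add: norm_quat_mult norm_quat_power power_add[symmetric])
    also have "\<dots> \<le> 2 / (real m + 2) * norm x ^ m"
      by (rule mult_right_mono) (use T_bounds[OF that] in simp_all)
    finally show ?thesis .
  qed
  define S where "S = (\<Sum>j\<le>m. qreal (T m j) * x ^ (m - j) * qcnj x ^ j)"
  have "norm S \<le> (\<Sum>j\<le>m. norm (qreal (T m j) * x ^ (m - j) * qcnj x ^ j))"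
    unfolding S_def by (rule norm_sum)
  also have "\<dots> \<le> (\<Sum>j\<le>m. 2 / (real m + 2) * norm x ^ m)"
    by (intro sum_mono summand) simp
  also have "\<dots> = (real m + 1) * (2 / (real m + 2) * norm x ^ m)"
    by simp
  finally have S: "norm S \<le> (real m + 1) * (2 / (real m + 2) * norm x ^ m)" .
  have "norm (P m x) = 1 / cT m * norm S"
    using cT_pos[of m] by (simp add: P_def S_def norm_quat_mult)
  also have "\<dots> \<le> (real m + 2) * ((real m + 1) * (2 / (real m + 2) * norm x ^ m))"
    by (rule mult_mono[OF inverse_cT_le S]) simp_all
  also have "\<dots> = 2 * (real m + 1) * norm x ^ m"
    by (simp add: field_simps)
  finally show ?thesis .
qed

lemma summable_Suc_mult_power:
  fixes t :: real
  assumes "\<bar>t\<bar> < 1"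
  shows "summable (\<lambda>m. real (Suc m) * t ^ m)"
proof -
  have "summable (\<lambda>m. diffs (\<lambda>_. 1) m * t ^ m)"
    by (rule termdiff_converges[where K=1]) (use assms in \<open>simp_all add: summable_geometric\<close>)
  then show ?thesis
    by (simp add: diffs_def)
qed

lemma norm_lt_one_if_Ell: "x \<in> Ell \<Longrightarrow> norm x < 1"
  unfolding Ell_def norm_quat_def qnorm2_def
  by simp (smt (verit) zero_le_power2)

lemma summable_norm_P:
  assumes "x \<in> Ell"
  shows "summable (\<lambda>m. norm (P m x))"
proof (rule summable_comparison_test')
  show "summable (\<lambda>m. 2 * (real (Suc m) * norm x ^ m))"
    using norm_lt_one_if_Ell[OF assms] by (intro summable_mult summable_Suc_mult_power) simp
  show "norm (norm (P m x)) \<le> 2 * (real (Suc m) * norm x ^ m)" for m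
    using norm_P_le[of m x] by (simp add: algebra_simps)
qed

section \<open>The kernel \<open>K\<^sub>B\<close>\<close>

text \<open>The columns of \<open>F\<close> span all sections \<open>K(\<cdot>,y) c\<close>.\<close>
lemma rkhs_finite_dim_factorization:
  assumes K: "\<And>x y. x \<in> S \<Longrightarrow> y \<in> S \<Longrightarrow> K x y = F x * mat_adj (F y)"
    and F: "\<And>x. F x \<in> carrier_mat r n"
  shows "rkhs_finite_dim K S r"
proof -
  define f where "f k = (\<lambda>x. col (F x) k)" for k
  have "\<forall>y\<in>S. \<forall>c\<in>carrier_vec r. \<exists>coef. \<forall>x\<in>S.
    K x y *\<^sub>v c = vec r (\<lambda>i. \<Sum>g\<in>f ` {..<n}. g x $ i * coef g)"
  proof (intro ballI)
    fix y and c :: "quat vec" assume y: "y \<in> S" and c: "c \<in> carrier_vec r"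
    define v where "v = mat_adj (F y) *\<^sub>v c"
    define coef where "coef g = (\<Sum>k\<in>{k \<in> {..<n}. f k = g}. v $ k)" for g
    show "\<exists>coef. \<forall>x\<in>S. K x y *\<^sub>v c = vec r (\<lambda>i. \<Sum>g\<in>f ` {..<n}. g x $ i * coef g)"
    proof (intro exI[of _ coef] ballI eq_vecI)
      fix x i assume x: "x \<in> S" and "i < dim_vec (vec r (\<lambda>i. \<Sum>g\<in>f ` {..<n}. g x $ i * coef g))"
      then have i: "i < r" by simp
      have "(K x y *\<^sub>v c) $ i = (F x *\<^sub>v v) $ i"
        using K[OF x y] F c by (simp add: v_def assoc_mult_mat_vec[of _ r n _ r])
      also have "\<dots> = (\<Sum>k<n. F x $$ (i,k) * v $ k)"
        unfolding v_def by (rule index_mult_mat_vec_sum[OF F mult_mat_vec_carrier[OF mat_adj_carrier[OF F] c] i])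
      also have "\<dots> = (\<Sum>k<n. f k x $ i * v $ k)"
        using F[of x] i by (simp add: f_def)
      also have "\<dots> = (\<Sum>g\<in>f ` {..<n}. \<Sum>k\<in>{k \<in> {..<n}. f k = g}. f k x $ i * v $ k)"
        by (rule sum.image_gen) simp
      also have "\<dots> = (\<Sum>g\<in>f ` {..<n}. g x $ i * coef g)"
        unfolding coef_def sum_distrib_left by (intro sum.cong) auto
      finally show "(K x y *\<^sub>v c) $ i = vec r (\<lambda>i. \<Sum>g\<in>f ` {..<n}. g x $ i * coef g) $ i"
        using i by simp
    next
      fix x assume x: "x \<in> S"
      show "dim_vec (K x y *\<^sub>v c) = dim_vec (vec r (\<lambda>i. \<Sum>g\<in>f ` {..<n}. g x $ i * coef g))"
        using K[OF x y] carrier_matD[OF F[of x]] by simp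
    qed
  qed
  then show ?thesis
    unfolding rkhs_finite_dim_def by blast
qed

context unitary_colligation
begin

lemma adjoint_colligation_mult_mat:
  assumes X: "X \<in> carrier_mat m N" and Y: "Y \<in> carrier_mat m r"
    and X': "X' \<in> carrier_mat m' N" and Y': "Y' \<in> carrier_mat m' r"
  shows "(X * A + Y * C) * mat_adj (X' * A + Y' * C) + (X * B + Y * D) * mat_adj (X' * B + Y' * D)
    = X * mat_adj X' + Y * mat_adj Y'"
proof (rule eq_matI)
  fix i j assume "i < dim_row (X * mat_adj X' + Y * mat_adj Y')" "j < dim_col (X * mat_adj X' + Y * mat_adj Y')"
  with Y Y' have ij: "i < m" "j < m'" by auto
  let ?x = "col (mat_adj X) i" and ?y = "col (mat_adj Y) i"
    and ?x' = "col (mat_adj X') j" and ?y' = "col (mat_adj Y') j"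
  have col_comb: "col (mat_adj (U * E + W * H)) k = mat_adj E *\<^sub>v col (mat_adj U) k + mat_adj H *\<^sub>v col (mat_adj W) k"
    if "U \<in> carrier_mat p N" "W \<in> carrier_mat p r" "E \<in> carrier_mat N q" "H \<in> carrier_mat r q" "k < p"
    for U W E H p q k
    using that by (simp add: col_mat_adj_add[of "U * E" p q "W * H"] col_mat_adj_mult[of U p N E q]
        col_mat_adj_mult[of W p r H q])
  note cols = col_comb[OF X Y A C ij(1)] col_comb[OF X Y B D ij(1)]
    col_comb[OF X' Y' A C ij(2)] col_comb[OF X' Y' B D ij(2)]
  have P: "X * A + Y * C \<in> carrier_mat m N" "X * B + Y * D \<in> carrier_mat m r"
    "X' * A + Y' * C \<in> carrier_mat m' N" "X' * B + Y' * D \<in> carrier_mat m' r"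
    using X Y X' Y' by auto
  have vecs: "?x \<in> carrier_vec N" "?x' \<in> carrier_vec N" "?y \<in> carrier_vec r" "?y' \<in> carrier_vec r"
    using col_dim[of "mat_adj X" i] col_dim[of "mat_adj X'" j] col_dim[of "mat_adj Y" i] col_dim[of "mat_adj Y'" j]
      carrier_matD[OF X] carrier_matD[OF X'] carrier_matD[OF Y] carrier_matD[OF Y']
    by simp_all
  have "((X * A + Y * C) * mat_adj (X' * A + Y' * C) + (X * B + Y * D) * mat_adj (X' * B + Y' * D)) $$ (i,j)
      = ((X * A + Y * C) * mat_adj (X' * A + Y' * C)) $$ (i,j) + ((X * B + Y * D) * mat_adj (X' * B + Y' * D)) $$ (i,j)"
    using carrier_matD[OF P(2)] carrier_matD[OF P(4)] ij by (intro index_add_mat) simp_all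
  also have "\<dots> = qinner ?x ?x' + qinner ?y ?y'"
    unfolding index_mult_mat_adj[OF P(1) P(3) ij] index_mult_mat_adj[OF P(2) P(4) ij] cols
    by (rule adjoint_colligation_qinner[OF vecs])
  also have "\<dots> = (X * mat_adj X') $$ (i,j) + (Y * mat_adj Y') $$ (i,j)"
    by (simp only: index_mult_mat_adj[OF X X' ij] index_mult_mat_adj[OF Y Y' ij])
  also have "\<dots> = (X * mat_adj X' + Y * mat_adj Y') $$ (i,j)"
    using carrier_matD[OF Y] carrier_matD[OF Y'] ij by (intro index_add_mat[symmetric]) simp_all
  finally show "((X * A + Y * C) * mat_adj (X' * A + Y' * C) + (X * B + Y * D) * mat_adj (X' * B + Y' * D)) $$ (i,j)
      = (X * mat_adj X' + Y * mat_adj Y') $$ (i,j)" .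
qed (use Y Y' in auto)

definition obs_series :: "quat \<Rightarrow> nat \<Rightarrow> quat mat" where
  "obs_series x n = mat r N (\<lambda>(i,k). \<Sum>p. P (n + p) x * (C * A ^\<^sub>m p) $$ (i,k))"

lemma obs_series_carrier [simp]: "obs_series x n \<in> carrier_mat r N"
  by (simp add: obs_series_def)

lemma summable_norm_obs_series_terms:
  assumes x: "x \<in> Ell" and i: "i < r" and k: "k < N"
  shows "summable (\<lambda>p. norm (P (n + p) x * (C * A ^\<^sub>m p) $$ (i,k)))"
proof (rule summable_comparison_test')
  show "summable (\<lambda>p. norm (P (p + n) x))"
    by (rule summable_ignore_initial_segment[OF summable_norm_P[OF x]])
  show "norm (norm (P (n + p) x * (C * A ^\<^sub>m p) $$ (i,k))) \<le> norm (P (p + n) x)" for p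
    using norm_index_mult_pow_le_one[OF i k, of p]
    by (simp add: norm_quat_mult add.commute mult_left_le)
qed

lemma obs_series_tendsto_zero:
  assumes x: "x \<in> Ell" and i: "i < r" and k: "k < N"
  shows "(\<lambda>n. obs_series x n $$ (i,k)) \<longlonglongrightarrow> 0"
proof (rule tendsto_zero_norm_bound)
  let ?w = "\<lambda>p. norm (P p x)"
  have w: "summable ?w" by (rule summable_norm_P[OF x])
  have "(\<lambda>n. suminf ?w - (\<Sum>p<n. ?w p)) \<longlonglongrightarrow> suminf ?w - suminf ?w"
    by (intro tendsto_diff tendsto_const summable_LIMSEQ w)
  then show "(\<lambda>n. \<Sum>p. ?w (p + n)) \<longlonglongrightarrow> 0"
    by (simp add: suminf_minus_initial_segment[OF w])
  fix n
  have "norm (obs_series x n $$ (i,k)) = norm (\<Sum>p. P (n + p) x * (C * A ^\<^sub>m p) $$ (i,k))"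
    using i k by (simp add: obs_series_def)
  also have "\<dots> \<le> (\<Sum>p. norm (P (n + p) x * (C * A ^\<^sub>m p) $$ (i,k)))"
    by (rule summable_norm[OF summable_norm_obs_series_terms[OF x i k]])
  also have "\<dots> \<le> (\<Sum>p. ?w (p + n))"
    by (rule suminf_le[OF _ summable_norm_obs_series_terms[OF x i k] summable_ignore_initial_segment[OF w]])
       (use norm_index_mult_pow_le_one[OF i k] in \<open>simp add: norm_quat_mult add.commute mult_left_le\<close>)
  finally show "norm (obs_series x n $$ (i,k)) \<le> (\<Sum>p. ?w (p + n))" .
qed

lemma sums_obs_series_mult:
  assumes x: "x \<in> Ell" and Z: "Z \<in> carrier_mat N q" and i: "i < r" and l: "l < q"
  shows "(\<lambda>p. P (n + p) x * (C * A ^\<^sub>m p * Z) $$ (i,l)) sums (obs_series x n * Z) $$ (i,l)"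
proof -
  have "(\<lambda>p. \<Sum>k<N. P (n + p) x * (C * A ^\<^sub>m p) $$ (i,k) * Z $$ (k,l))
      sums (\<Sum>k<N. obs_series x n $$ (i,k) * Z $$ (k,l))"
    using i summable_norm_cancel[OF summable_norm_obs_series_terms[OF x i]]
    by (intro sums_sum sums_mult2) (simp add: obs_series_def summable_sums)
  moreover have "P (n + p) x * (C * A ^\<^sub>m p * Z) $$ (i,l)
      = (\<Sum>k<N. P (n + p) x * (C * A ^\<^sub>m p) $$ (i,k) * Z $$ (k,l))" for p
    by (simp add: index_mult_mat_sum[OF mult_pow_carrier Z i l] sum_distrib_left mult.assoc)
  moreover have "(obs_series x n * Z) $$ (i,l) = (\<Sum>k<N. obs_series x n $$ (i,k) * Z $$ (k,l))"
    by (rule index_mult_mat_sum[OF obs_series_carrier Z i l])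
  ultimately show ?thesis
    by simp
qed

lemma obs_series_rec:
  assumes x: "x \<in> Ell"
  shows "obs_series x n = obs_series x (Suc n) * A + (P n x \<cdot>\<^sub>m 1\<^sub>m r) * C"
proof (rule eq_matI)
  fix i k assume "i < dim_row (obs_series x (Suc n) * A + (P n x \<cdot>\<^sub>m 1\<^sub>m r) * C)"
    "k < dim_col (obs_series x (Suc n) * A + (P n x \<cdot>\<^sub>m 1\<^sub>m r) * C)"
  then have i: "i < r" and k: "k < N" by auto
  let ?f = "\<lambda>p. P (n + p) x * (C * A ^\<^sub>m p) $$ (i,k)"
  have "?f (Suc p) = P (Suc n + p) x * (C * A ^\<^sub>m p * A) $$ (i,k)" for p
    by (simp add: assoc_mult_mat[OF C pow_carriers(1) A])
  then have "(\<lambda>p. ?f (Suc p)) sums (obs_series x (Suc n) * A) $$ (i,k)"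
    by (simp only: sums_obs_series_mult[OF x A i k])
  then have "?f sums ((obs_series x (Suc n) * A) $$ (i,k) + P n x * C $$ (i,k))"
    using sums_Suc[of ?f] by simp
  then show "obs_series x n $$ (i,k) = (obs_series x (Suc n) * A + (P n x \<cdot>\<^sub>m 1\<^sub>m r) * C) $$ (i,k)"
    using i k by (simp add: obs_series_def smult_one_mult[OF C] sums_iff)
qed (auto simp: obs_series_def)

lemma PnB_eq_obs_series:
  assumes x: "x \<in> Ell"
  shows "PnB A B C D r n x = obs_series x (Suc n) * B + (P n x \<cdot>\<^sub>m 1\<^sub>m r) * D"
proof (rule eq_matI)
  fix i l assume "i < dim_row (obs_series x (Suc n) * B + (P n x \<cdot>\<^sub>m 1\<^sub>m r) * D)"
    "l < dim_col (obs_series x (Suc n) * B + (P n x \<cdot>\<^sub>m 1\<^sub>m r) * D)"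
  then have i: "i < r" and l: "l < r" by auto
  let ?h = "\<lambda>m. P (n + m) x * bcoef A B C D m $$ (i,l)"
  have "?h (Suc m) = P (Suc n + m) x * (C * A ^\<^sub>m m * B) $$ (i,l)" for m
    by (simp add: bcoef_def)
  then have "(\<lambda>m. ?h (Suc m)) sums (obs_series x (Suc n) * B) $$ (i,l)"
    by (simp only: sums_obs_series_mult[OF x B i l])
  then have "?h sums ((obs_series x (Suc n) * B) $$ (i,l) + P n x * D $$ (i,l))"
    using sums_Suc[of ?h] by (simp add: bcoef_def)
  then show "PnB A B C D r n x $$ (i,l) = (obs_series x (Suc n) * B + (P n x \<cdot>\<^sub>m 1\<^sub>m r) * D) $$ (i,l)"
    using i l by (simp add: PnB_def smult_one_mult[OF D] sums_iff qsuminf_eq_suminf)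
qed (auto simp: PnB_def)

lemma kernel_step:
  assumes x: "x \<in> Ell" and y: "y \<in> Ell"
  shows "obs_series x n * mat_adj (obs_series y n) + PnB A B C D r n x * mat_adj (PnB A B C D r n y)
    = obs_series x (Suc n) * mat_adj (obs_series y (Suc n)) + (P n x \<cdot>\<^sub>m 1\<^sub>m r) * mat_adj (P n y \<cdot>\<^sub>m 1\<^sub>m r)"
  unfolding obs_series_rec[OF x, of n] obs_series_rec[OF y, of n]
    PnB_eq_obs_series[OF x, of n] PnB_eq_obs_series[OF y, of n]
  by (rule adjoint_colligation_mult_mat) auto

lemma obs_series_gram_tendsto_zero:
  assumes x: "x \<in> Ell" and y: "y \<in> Ell" and i: "i < r" and j: "j < r"
  shows "(\<lambda>n. (obs_series x n * mat_adj (obs_series y n)) $$ (i,j)) \<longlonglongrightarrow> 0"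
proof -
  have "(\<lambda>n. \<Sum>k<N. obs_series x n $$ (i,k) * qcnj (obs_series y n $$ (j,k))) \<longlonglongrightarrow> 0"
    using bounded_linear.tendsto[OF bounded_linear_qcnj obs_series_tendsto_zero[OF y j]]
    by (intro tendsto_null_sum tendsto_mult_zero obs_series_tendsto_zero[OF x i]) simp_all
  then show ?thesis
    by (simp only: index_mult_mat_adj_sum[OF obs_series_carrier obs_series_carrier i j])
qed

lemma KB_term_telescopes:
  assumes x: "x \<in> Ell" and y: "y \<in> Ell" and i: "i < r" and j: "j < r"
  shows "(if i = j then P n x * qcnj (P n y) else 0)
      - (\<Sum>l<r. PnB A B C D r n x $$ (i,l) * qcnj (PnB A B C D r n y $$ (j,l)))
    = (obs_series x n * mat_adj (obs_series y n)) $$ (i,j)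
      - (obs_series x (Suc n) * mat_adj (obs_series y (Suc n))) $$ (i,j)"
proof -
  have "((P n x \<cdot>\<^sub>m 1\<^sub>m r) * mat_adj (P n y \<cdot>\<^sub>m 1\<^sub>m r)) $$ (i,j) = (if i = j then P n x * qcnj (P n y) else 0)"
    using i j by (simp add: smult_one_mult[of "mat_adj (P n y \<cdot>\<^sub>m 1\<^sub>m r)" r r])
  moreover have "(PnB A B C D r n x * mat_adj (PnB A B C D r n y)) $$ (i,j)
      = (\<Sum>l<r. PnB A B C D r n x $$ (i,l) * qcnj (PnB A B C D r n y $$ (j,l)))"
    using i j by (intro index_mult_mat_adj_sum) (simp_all add: PnB_def)
  moreover have "(obs_series x n * mat_adj (obs_series y n)) $$ (i,j)
        + (PnB A B C D r n x * mat_adj (PnB A B C D r n y)) $$ (i,j)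
      = (obs_series x (Suc n) * mat_adj (obs_series y (Suc n))) $$ (i,j)
        + ((P n x \<cdot>\<^sub>m 1\<^sub>m r) * mat_adj (P n y \<cdot>\<^sub>m 1\<^sub>m r)) $$ (i,j)"
    using arg_cong[OF kernel_step[OF x y, of n], of "\<lambda>M. M $$ (i,j)"] i j
    by (simp add: PnB_def)
  ultimately show ?thesis
    by (simp add: algebra_simps)
qed

lemma KB_eq:
  assumes x: "x \<in> Ell" and y: "y \<in> Ell"
  shows "KB A B C D r x y = obs_series x 0 * mat_adj (obs_series y 0)"
proof (rule eq_matI)
  fix i j assume "i < dim_row (obs_series x 0 * mat_adj (obs_series y 0))"
    "j < dim_col (obs_series x 0 * mat_adj (obs_series y 0))"
  then have i: "i < r" and j: "j < r"
    using carrier_matD[OF obs_series_carrier] by auto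
  let ?T = "\<lambda>n. (obs_series x n * mat_adj (obs_series y n)) $$ (i,j)"
  have "(\<lambda>n. ?T n - ?T (Suc n)) sums ?T 0"
    using telescope_sums'[OF obs_series_gram_tendsto_zero[OF x y i j]] by simp
  then show "KB A B C D r x y $$ (i,j) = ?T 0"
    using i j by (simp add: KB_def KB_term_telescopes[OF x y i j] qsuminf_eq_suminf sums_iff)
qed (simp_all add: KB_def obs_series_def)

theorem rkhs_finite_dim_KB: "rkhs_finite_dim (KB A B C D r) Ell r"
  by (rule rkhs_finite_dim_factorization[OF KB_eq obs_series_carrier])

end

theorem mainTheorem18:
  fixes N r :: nat and A B C D :: "quat mat"
  assumes "A \<in> carrier_mat N N" and "B \<in> carrier_mat N r"
    and "C \<in> carrier_mat r N" and "D \<in> carrier_mat r r"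
    and "qunitary (four_block_mat A B C D)"
  shows "(\<forall>u\<in>H2 r. MB A B C D r u \<in> H2 r \<and> H2norm2 (MB A B C D r u) = H2norm2 u)
         \<and> rkhs_finite_dim (KB A B C D r) Ell r"
proof -
  interpret unitary_colligation A B C D N r
    using assms by unfold_locales
  show ?thesis
    using MB_isometry rkhs_finite_dim_KB by blast
qed

end
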